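(* Let $G$ be an undirected, weighted, connected graph on vertices $1,\dots,n$, and let $H$ be either its adjacency matrix or its Laplacian matrix. For real $t$ let $p(t)=|\langle s|e^{itH}|r\rangle|^2$ be the fidelity of state transfer from a sender vertex $s$ to a receiver vertex $r$. Suppose there is perfect state transfer from $s$ to $r$ at time $t_0$, i.e. $p(t_0)=1$. Let $\lambda_1$ and $\lambda_n$ denote the smallest and largest eigenvalues of $H$, and let $h\in\mathbb{R}$ satisfy $|h|<\frac{\pi}{\lambda_n-\lambda_1}$. Then \[ p(t_0+h)\ \ge\ \frac14\left|e^{ih\lambda_1}+e^{ih\lambda_n}\right|^2 . \]
   Context: For a weighted graph with edge weights $w(j,k)$, the adjacency matrix $A=[a_{jk}]$ has $a_{jk}=w(j,k)$ if $j,k$ are adjacent and $a_{jk}=0$ otherwise; the Laplacian is $L=R-A$ where $R$ is the diagonal matrix of row sums of $A$. $\{|1\rangle,\dots,|n\rangle\}$ is the standard basis of $\mathbb{C}^n$, so $\langle s|e^{itH}|r\rangle$ is the $(s,r)$ entry of $e^{itH}$. *)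

theory Defs
  imports "HOL-Analysis.Analysis"
begin

text \<open>Weighted graph on the finite vertex type 'n: symmetric irreflexive edge relation E,
  symmetric weight function w.\<close>

definition adj_mat :: "('n::finite \<Rightarrow> 'n \<Rightarrow> bool) \<Rightarrow> ('n \<Rightarrow> 'n \<Rightarrow> real) \<Rightarrow> real^'n^'n" where
  "adj_mat E w = (\<chi> j k. if E j k then w j k else 0)"

definition lap_mat :: "('n::finite \<Rightarrow> 'n \<Rightarrow> bool) \<Rightarrow> ('n \<Rightarrow> 'n \<Rightarrow> real) \<Rightarrow> real^'n^'n" where
  "lap_mat E w = (\<chi> j k. if j = k then (\<Sum>l\<in>UNIV. adj_mat E w $ j $ l) else 0) - adj_mat E w"

primrec cmat_pow :: "complex^'n^'n \<Rightarrow> nat \<Rightarrow> complex^'n^'n" where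
  "cmat_pow A 0 = mat 1"
| "cmat_pow A (Suc k) = A ** cmat_pow A k"

definition mat_exp :: "complex^'n^'n \<Rightarrow> complex^'n^'n" where
  "mat_exp A = (\<chi> i j. \<Sum>k. (cmat_pow A k) $ i $ j / of_nat (fact k))"

definition evol :: "real^'n^'n \<Rightarrow> real \<Rightarrow> complex^'n^'n" where
  "evol H t = mat_exp (\<chi> i j. \<i> * complex_of_real t * complex_of_real (H $ i $ j))"

definition fidelity :: "real^'n^'n \<Rightarrow> 'n \<Rightarrow> 'n \<Rightarrow> real \<Rightarrow> real" where
  "fidelity H s r t = (cmod (evol H t $ s $ r))\<^sup>2"

definition real_eigenvalues :: "real^'n^'n \<Rightarrow> real set" where
  "real_eigenvalues H = {c. \<exists>v. v \<noteq> 0 \<and> H *v v = c *\<^sub>R v}"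

end

theory Submission
  imports Defs
begin

text \<open>A real symmetric \<open>H\<close> has an orthonormal eigenbasis \<open>B\<close>, \<open>H b = d b \<cdot> b\<close> (obtained by
  repeatedly maximising the quadratic form on the unit sphere of an invariant subspace), so that
  \<open>\<langle>s|exp (i t H)|r\<rangle> = \<Sum>\<^sub>b exp (i t d b) b\<^sub>s b\<^sub>r\<close>. Perfect state transfer at \<open>t\<^sub>0\<close> is the
  equality case of Cauchy--Schwarz and forces \<open>b\<^sub>r exp (i t\<^sub>0 d b) = \<gamma> b\<^sub>s\<close> with \<open>|\<gamma>| = 1\<close>; hence
  \<open>p(t\<^sub>0 + h) = |\<Sum>\<^sub>b b\<^sub>s\<^sup>2 exp (i h d b)|\<^sup>2\<close>, the squared modulus of a convex combination of unit
  complex numbers whose arguments lie in an arc of length \<open>|h| (\<lambda>\<^sub>n - \<lambda>\<^sub>1) < \<pi>\<close>. Such a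
  combination has modulus at least the cosine of half the arc, which is the bound claimed.\<close>

lemma symmetric_matrix_inner_commute:
  fixes A :: "real^'n::finite^'n"
  assumes "transpose A = A"
  shows "(A *v x) \<bullet> y = x \<bullet> (A *v y)"
  by (metis assms dot_lmul_matrix inner_commute vector_transpose_matrix)

lemma quadratic_form_max_on_sphere_stationary:
  fixes A :: "real^'n::finite^'n"
  assumes sym: "transpose A = A"
    and S: "subspace S" and v: "v \<in> S" "norm v = 1"
    and max: "\<And>x. x \<in> S \<Longrightarrow> norm x = 1 \<Longrightarrow> x \<bullet> (A *v x) \<le> v \<bullet> (A *v v)"
    and u: "u \<in> S" "u \<bullet> v = 0"
  shows "u \<bullet> (A *v v) = 0"
proof -
  define l where "l = v \<bullet> (A *v v)"
  define b where "b = u \<bullet> (A *v v)"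
  define c where "c = u \<bullet> (A *v u) - l * (u \<bullet> u)"
  have vv: "v \<bullet> v = 1" using v by (simp add: norm_eq_1)
  have perturb: "2 * e * b + e^2 * c \<le> 0" for e :: real
  proof -
    define x where "x = v + e *\<^sub>R u"
    have xS: "x \<in> S" using S v u unfolding x_def by (simp add: subspace_add subspace_scale)
    have xx: "x \<bullet> x = 1 + e^2 * (u \<bullet> u)"
      unfolding x_def using vv u(2) by (simp add: inner_add inner_commute power2_eq_square)
    hence xpos: "x \<bullet> x > 0" by (smt (verit) inner_ge_zero mult_nonneg_nonneg zero_le_power2)
    hence nx: "norm x > 0" by (simp add: inner_gt_zero_iff)
    define y where "y = (1 / norm x) *\<^sub>R x"
    have "y \<bullet> (A *v y) \<le> l"
      using max[of y] nx S xS unfolding y_def l_def by (simp add: subspace_scale)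
    moreover have "y \<bullet> (A *v y) = (x \<bullet> (A *v x)) / (x \<bullet> x)"
      unfolding y_def by (simp add: matrix_vector_mult_scaleR power2_norm_eq_inner[symmetric] power2_eq_square)
    ultimately have "x \<bullet> (A *v x) \<le> l * (x \<bullet> x)" using xpos by (simp add: divide_le_eq)
    moreover have "x \<bullet> (A *v x) = l + 2 * e * b + e^2 * (u \<bullet> (A *v u))"
      using symmetric_matrix_inner_commute[OF sym, of v u]
      unfolding x_def l_def b_def
      by (simp add: matrix_vector_right_distrib matrix_vector_mult_scaleR inner_add inner_commute
          power2_eq_square algebra_simps)
    ultimately show ?thesis unfolding c_def xx by (simp add: algebra_simps)
  qed
  \<comment> \<open>A quadratic \<open>2 e b + e\<^sup>2 c\<close> that is nonpositive for all \<open>e\<close> has \<open>b = 0\<close>;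
     test it at \<open>e = b / (\<bar>c\<bar> + 1)\<close>.\<close>
  define e where "e = b / (\<bar>c\<bar> + 1)"
  have "\<bar>c\<bar> + 1 \<noteq> 0" by linarith
  hence "(2 * e * b + e^2 * c) * (\<bar>c\<bar> + 1)^2 = b^2 * (2 * (\<bar>c\<bar> + 1) + c)"
    unfolding e_def by (simp add: power2_eq_square divide_simps) (simp add: algebra_simps)
  moreover have "(2 * e * b + e^2 * c) * (\<bar>c\<bar> + 1)^2 \<le> 0"
    using perturb[of e] by (simp add: mult_nonpos_nonneg)
  moreover have "2 * (\<bar>c\<bar> + 1) + c > 0" by (simp add: abs_if)
  ultimately have "b^2 \<le> 0" by (simp add: mult_le_0_iff)
  thus ?thesis unfolding b_def by simp
qed

lemma symmetric_matrix_unit_eigenvector_in_subspace: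
  fixes A :: "real^'n::finite^'n"
  assumes sym: "transpose A = A" and S: "subspace S" "S \<noteq> {0}"
    and invariant: "\<And>x. x \<in> S \<Longrightarrow> A *v x \<in> S"
  obtains v where "v \<in> S" "norm v = 1" "A *v v = (v \<bullet> (A *v v)) *\<^sub>R v"
proof -
  obtain x0 where x0: "x0 \<in> S" "x0 \<noteq> 0" using S subspace_0 by blast
  define K where "K = S \<inter> sphere 0 1"
  have "compact K" unfolding K_def using S by (simp add: closed_subspace closed_Int_compact)
  moreover have "(1 / norm x0) *\<^sub>R x0 \<in> K" unfolding K_def using x0 S by (simp add: subspace_scale)
  moreover have "continuous_on K (\<lambda>x. x \<bullet> (A *v x))"
    by (intro continuous_intros linear_continuous_on) (simp add: matrix_vector_mul_linear_gen linear_linear)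
  ultimately obtain v where vK: "v \<in> K" and vmax: "\<And>x. x \<in> K \<Longrightarrow> x \<bullet> (A *v x) \<le> v \<bullet> (A *v v)"
    using continuous_attains_sup[of K] by blast
  have vS: "v \<in> S" and nv: "norm v = 1" using vK unfolding K_def by auto
  define l where "l = v \<bullet> (A *v v)"
  define z where "z = A *v v - l *\<^sub>R v"
  have vv: "v \<bullet> v = 1" using nv by (simp add: norm_eq_1)
  have zS: "z \<in> S" unfolding z_def using S invariant vS by (simp add: subspace_diff subspace_scale)
  have zv: "z \<bullet> v = 0"
    unfolding z_def l_def using vv by (simp add: inner_diff_left inner_commute[of "A *v v"])
  have "z \<bullet> (A *v v) = 0"
    by (rule quadratic_form_max_on_sphere_stationary[OF sym S(1) vS nv _ zS zv])
      (use vmax K_def in auto)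
  hence "z \<bullet> z = 0" using zv unfolding z_def by (simp add: inner_diff_right)
  hence "A *v v = l *\<^sub>R v" unfolding z_def by simp
  thus ?thesis using that vS nv unfolding l_def by blast
qed

lemma symmetric_matrix_orthonormal_eigenbasis_of_subspace:
  fixes A :: "real^'n::finite^'n"
  assumes sym: "transpose A = A" and "subspace S" and "\<And>x. x \<in> S \<Longrightarrow> A *v x \<in> S"
  shows "\<exists>B. B \<subseteq> S \<and> pairwise orthogonal B \<and> (\<forall>b\<in>B. norm b = 1) \<and> span B = S \<and>
           (\<forall>b\<in>B. A *v b = (b \<bullet> (A *v b)) *\<^sub>R b)"
  using assms(2,3)
proof (induction "dim S" arbitrary: S rule: less_induct)
  case less
  show ?case
  proof (cases "S = {0}")
    case True
    thus ?thesis by (intro exI[of _ "{}"]) auto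
  next
    case False
    then obtain v where vS: "v \<in> S" and nv: "norm v = 1" and ev: "A *v v = (v \<bullet> (A *v v)) *\<^sub>R v"
      using symmetric_matrix_unit_eigenvector_in_subspace[OF sym less.prems(1) False less.prems(2)] by blast
    have vv: "v \<bullet> v = 1" using nv by (simp add: norm_eq_1)
    define S' where "S' = {x \<in> S. x \<bullet> v = 0}"
    have sS': "subspace S'" unfolding S'_def using less.prems(1)
      by (auto simp: subspace_def inner_add_left)
    have iS': "A *v x \<in> S'" if "x \<in> S'" for x
      using that less.prems(2) ev symmetric_matrix_inner_commute[OF sym, of x v] unfolding S'_def
      by (metis (mono_tags, lifting) inner_scaleR_right mem_Collect_eq mult_zero_right)
    have "S' \<subset> S" using vS vv unfolding S'_def
      by (metis (mono_tags, lifting) mem_Collect_eq psubsetI subsetI zero_neq_one)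
    hence "dim S' < dim S" using sS' less.prems(1) by (metis dim_psubset span_eq_iff)
    then obtain B' where B': "B' \<subseteq> S'" "pairwise orthogonal B'" "\<forall>b\<in>B'. norm b = 1" "span B' = S'"
        "\<forall>b\<in>B'. A *v b = (b \<bullet> (A *v b)) *\<^sub>R b"
      using less.hyps[OF _ sS' iS'] by blast
    have "S \<subseteq> span (insert v B')"
    proof
      fix x assume xS: "x \<in> S"
      have "x - (x \<bullet> v) *\<^sub>R v \<in> span B'" unfolding B'(4) S'_def using xS vS vv less.prems(1)
        by (simp add: subspace_diff subspace_scale inner_diff_left)
      hence "(x - (x \<bullet> v) *\<^sub>R v) + (x \<bullet> v) *\<^sub>R v \<in> span (insert v B')"
        by (meson span_add span_base span_mono span_scale insertI1 subset_insertI subsetD)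
      thus "x \<in> span (insert v B')" by simp
    qed
    moreover have "span (insert v B') \<subseteq> S"
      using B'(1) vS less.prems(1) unfolding S'_def by (intro span_minimal) auto
    ultimately show ?thesis
      using B' vS nv ev unfolding S'_def
      by (intro exI[of _ "insert v B'"]) (auto simp: pairwise_insert orthogonal_def inner_commute)
  qed
qed

lemma orthonormal_basis_sum_components:
  fixes B :: "(real^'n::finite) set"
  assumes B: "pairwise orthogonal B" "\<forall>b\<in>B. norm b = 1" "span B = UNIV"
  shows "(\<Sum>b\<in>B. b$i * b$j) = (if i = j then 1 else 0)"
proof -
  have "axis j 1 = (\<Sum>b\<in>B. (axis j 1 \<bullet> b) *\<^sub>R b)"
    using orthonormal_basis_expand[OF B(1)] B(2,3) pairwise_orthogonal_imp_finite[OF B(1)] by simp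
  hence "axis j 1 $ i = (\<Sum>b\<in>B. b$j * b$i)" by (simp add: inner_axis' sum_component)
  thus ?thesis by (simp add: axis_def mult.commute eq_commute[of j i])
qed

lemma orthonormal_eigenbasis_matrix_entry:
  fixes H :: "real^'n::finite^'n"
  assumes B: "pairwise orthogonal B" "\<forall>b\<in>B. norm b = 1" "span B = UNIV"
    and ev: "\<And>b. b \<in> B \<Longrightarrow> H *v b = d b *\<^sub>R b"
  shows "H$i$j = (\<Sum>b\<in>B. d b * (b$i * b$j))"
proof -
  have "H$i$j = (\<Sum>l\<in>UNIV. H$i$l * (if l = j then 1 else 0))"
    by (simp add: if_distrib cong: if_cong)
  also have "\<dots> = (\<Sum>l\<in>UNIV. H$i$l * (\<Sum>b\<in>B. b$l * b$j))"
    by (simp add: orthonormal_basis_sum_components[OF B])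
  also have "\<dots> = (\<Sum>b\<in>B. (\<Sum>l\<in>UNIV. H$i$l * b$l) * b$j)"
    by (simp add: sum_distrib_left sum_distrib_right algebra_simps) (rule sum.swap)
  also have "\<dots> = (\<Sum>b\<in>B. (H *v b)$i * b$j)" by (simp add: matrix_vector_mult_def)
  also have "\<dots> = (\<Sum>b\<in>B. d b * (b$i * b$j))" by (intro sum.cong refl) (simp add: ev)
  finally show ?thesis .
qed

lemma real_eigenvalues_orthonormal_eigenbasis:
  fixes H :: "real^'n::finite^'n"
  assumes sym: "transpose H = H"
    and B: "pairwise orthogonal B" "\<forall>b\<in>B. norm b = 1" "span B = UNIV"
    and ev: "\<And>b. b \<in> B \<Longrightarrow> H *v b = d b *\<^sub>R b"
  shows "real_eigenvalues H = d ` B"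
proof
  show "d ` B \<subseteq> real_eigenvalues H"
  proof
    fix c assume "c \<in> d ` B"
    then obtain b where "b \<in> B" "c = d b" by blast
    thus "c \<in> real_eigenvalues H"
      unfolding real_eigenvalues_def using ev B(2) by (intro CollectI exI[of _ b]) auto
  qed
  show "real_eigenvalues H \<subseteq> d ` B"
  proof
    fix c assume "c \<in> real_eigenvalues H"
    then obtain v where v: "v \<noteq> 0" "H *v v = c *\<^sub>R v" unfolding real_eigenvalues_def by blast
    have "v = (\<Sum>b\<in>B. (v \<bullet> b) *\<^sub>R b)"
      using orthonormal_basis_expand[OF B(1)] B(2,3) pairwise_orthogonal_imp_finite[OF B(1)] by simp
    then obtain b where b: "b \<in> B" "v \<bullet> b \<noteq> 0"
      using v(1) by (metis (no_types, lifting) scale_eq_0_iff sum.neutral)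
    have "c * (v \<bullet> b) = v \<bullet> (H *v b)"
      using v(2) symmetric_matrix_inner_commute[OF sym, of v b] by simp
    also have "\<dots> = d b * (v \<bullet> b)" using ev[OF b(1)] by simp
    finally show "c \<in> d ` B" using b by simp
  qed
qed

definition spectral_mat :: "(real^'n) set \<Rightarrow> (real^'n \<Rightarrow> complex) \<Rightarrow> complex^'n^'n" where
  "spectral_mat B g = (\<chi> i j. \<Sum>b\<in>B. g b * of_real (b$i * b$j))"

context
  fixes B :: "(real^'n::finite) set"
  assumes finB: "finite B"
    and orth: "\<And>b c. b \<in> B \<Longrightarrow> c \<in> B \<Longrightarrow> b \<bullet> c = (if b = c then 1 else 0)"
    and components: "\<And>i j. (\<Sum>b\<in>B. b$i * b$j) = (if i = j then 1 else 0)"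
begin

lemma spectral_mat_mult: "spectral_mat B f ** spectral_mat B g = spectral_mat B (\<lambda>b. f b * g b)"
proof -
  have "(spectral_mat B f ** spectral_mat B g) $ i $ j = spectral_mat B (\<lambda>b. f b * g b) $ i $ j" for i j
  proof -
    have "(spectral_mat B f ** spectral_mat B g) $ i $ j
        = (\<Sum>l\<in>UNIV. \<Sum>b\<in>B. \<Sum>c\<in>B. f b * g c * of_real (b$i * c$j) * of_real (b$l * c$l))"
      by (simp add: matrix_matrix_mult_def spectral_mat_def sum_product algebra_simps)
    also have "\<dots> = (\<Sum>b\<in>B. \<Sum>c\<in>B. f b * g c * of_real (b$i * c$j) * of_real (b \<bullet> c))"
      by (subst sum.swap) (simp add: sum.swap[of _ UNIV] inner_vec_def sum_distrib_left)
    also have "\<dots> = (\<Sum>b\<in>B. \<Sum>c\<in>B. if c = b then f b * g c * of_real (b$i * c$j) else 0)"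
      by (intro sum.cong refl) (simp add: orth)
    also have "\<dots> = (\<Sum>b\<in>B. f b * g b * of_real (b$i * b$j))"
      using finB by simp
    finally show ?thesis by (simp add: spectral_mat_def)
  qed
  thus ?thesis by (simp add: vec_eq_iff)
qed

lemma spectral_mat_one: "spectral_mat B (\<lambda>b. 1) = mat 1"
proof -
  have "spectral_mat B (\<lambda>b. 1) $ i $ j = of_real (\<Sum>b\<in>B. b$i * b$j)" for i j
    by (simp add: spectral_mat_def)
  thus ?thesis by (simp add: vec_eq_iff components mat_def)
qed

lemma cmat_pow_spectral_mat: "cmat_pow (spectral_mat B g) k = spectral_mat B (\<lambda>b. g b ^ k)"
  by (induction k) (simp_all add: spectral_mat_one spectral_mat_mult)

lemma mat_exp_spectral_mat: "mat_exp (spectral_mat B g) = spectral_mat B (\<lambda>b. exp (g b))"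
proof -
  have "mat_exp (spectral_mat B g) $ i $ j = spectral_mat B (\<lambda>b. exp (g b)) $ i $ j" for i j
  proof -
    have series: "(\<lambda>k. g b ^ k * of_real (b$i * b$j) / of_nat (fact k))
        sums (exp (g b) * of_real (b$i * b$j))" for b
      using sums_mult2[OF exp_converges[of "g b"], of "of_real (b$i * b$j)"]
      by (simp add: scaleR_conv_of_real divide_inverse_commute times_divide_eq_left mult.assoc)
    have "mat_exp (spectral_mat B g) $ i $ j
        = (\<Sum>k. \<Sum>b\<in>B. g b ^ k * of_real (b$i * b$j) / of_nat (fact k))"
      unfolding mat_exp_def cmat_pow_spectral_mat by (simp add: spectral_mat_def sum_divide_distrib)
    also have "\<dots> = (\<Sum>b\<in>B. \<Sum>k. g b ^ k * of_real (b$i * b$j) / of_nat (fact k))"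
      by (rule suminf_sum) (use series sums_summable in blast)
    also have "\<dots> = (\<Sum>b\<in>B. exp (g b) * of_real (b$i * b$j))"
      using series sums_unique by (metis (no_types, lifting))
    finally show ?thesis by (simp add: spectral_mat_def)
  qed
  thus ?thesis by (simp add: vec_eq_iff)
qed

end

lemma symmetric_matrix_evol_eigenbasis:
  fixes H :: "real^'n::finite^'n"
  assumes sym: "transpose H = H"
  obtains B :: "(real^'n) set" and d :: "real^'n \<Rightarrow> real"
  where "finite B" "\<And>i j. (\<Sum>b\<in>B. b$i * b$j) = (if i = j then 1 else 0)"
    and "real_eigenvalues H = d ` B"
    and "\<And>t i j. evol H t $ i $ j = (\<Sum>b\<in>B. cis (t * d b) * of_real (b$i * b$j))"
proof -
  obtain B where B: "pairwise orthogonal B" "\<forall>b\<in>B. norm b = 1" "span B = UNIV"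
      "\<forall>b\<in>B. H *v b = (b \<bullet> (H *v b)) *\<^sub>R b"
    using symmetric_matrix_orthonormal_eigenbasis_of_subspace[OF sym, of UNIV] by auto
  define d where "d b = b \<bullet> (H *v b)" for b
  have ev: "H *v b = d b *\<^sub>R b" if "b \<in> B" for b using B(4) that unfolding d_def by blast
  have finB: "finite B" using B(1) by (rule pairwise_orthogonal_imp_finite)
  have orth: "b \<bullet> c = (if b = c then 1 else 0)" if "b \<in> B" "c \<in> B" for b c
    using B(1,2) that by (auto simp: pairwise_def orthogonal_def norm_eq_1)
  note components = orthonormal_basis_sum_components[OF B(1-3)]
  have "evol H t = spectral_mat B (\<lambda>b. exp (\<i> * of_real t * of_real (d b)))" for t
  proof -
    have "(\<chi> i j. \<i> * complex_of_real t * complex_of_real (H $ i $ j))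
        = spectral_mat B (\<lambda>b. \<i> * of_real t * of_real (d b))"
      by (simp add: spectral_mat_def vec_eq_iff orthonormal_eigenbasis_matrix_entry[OF B(1-3) ev]
          sum_distrib_left algebra_simps)
    thus ?thesis unfolding evol_def by (simp add: mat_exp_spectral_mat[OF finB orth components])
  qed
  hence "evol H t $ i $ j = (\<Sum>b\<in>B. cis (t * d b) * of_real (b$i * b$j))" for t i j
    by (simp add: spectral_mat_def cis_conv_exp mult.assoc)
  with that finB components real_eigenvalues_orthonormal_eigenbasis[OF sym B(1-3) ev] show ?thesis
    by blast
qed

lemma sum_cmod_sq_diff_proj:
  fixes u :: "'b \<Rightarrow> real" and v :: "'b \<Rightarrow> complex"
  assumes finB: "finite B" and u1: "(\<Sum>b\<in>B. (u b)\<^sup>2) = 1"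
    and \<gamma>: "\<gamma> = (\<Sum>b\<in>B. of_real (u b) * v b)"
  shows "(\<Sum>b\<in>B. (cmod (v b - \<gamma> * of_real (u b)))\<^sup>2) = (\<Sum>b\<in>B. (cmod (v b))\<^sup>2) - (cmod \<gamma>)\<^sup>2"
proof -
  have "of_real ((cmod (v b - \<gamma> * of_real (u b)))\<^sup>2)
      = v b * cnj (v b) - cnj \<gamma> * (of_real (u b) * v b)
          - \<gamma> * cnj (of_real (u b) * v b) + \<gamma> * cnj \<gamma> * of_real ((u b)\<^sup>2)" for b
    unfolding complex_norm_square by (simp add: power2_eq_square algebra_simps)
  hence "of_real (\<Sum>b\<in>B. (cmod (v b - \<gamma> * of_real (u b)))\<^sup>2)
      = (\<Sum>b\<in>B. v b * cnj (v b) - cnj \<gamma> * (of_real (u b) * v b)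
          - \<gamma> * cnj (of_real (u b) * v b) + \<gamma> * cnj \<gamma> * of_real ((u b)\<^sup>2))"
    by (simp only: of_real_sum)
  also have "\<dots> = (\<Sum>b\<in>B. v b * cnj (v b)) - cnj \<gamma> * (\<Sum>b\<in>B. of_real (u b) * v b)
          - \<gamma> * cnj (\<Sum>b\<in>B. of_real (u b) * v b) + \<gamma> * cnj \<gamma> * of_real (\<Sum>b\<in>B. (u b)\<^sup>2)"
    by (simp add: sum.distrib sum_subtractf sum_distrib_left cnj_sum)
  also have "\<dots> = (\<Sum>b\<in>B. v b * cnj (v b)) - \<gamma> * cnj \<gamma>"
    using u1 by (simp add: \<gamma>[symmetric])
  also have "\<dots> = of_real ((\<Sum>b\<in>B. (cmod (v b))\<^sup>2) - (cmod \<gamma>)\<^sup>2)"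
    by (simp only: of_real_diff of_real_sum complex_norm_square)
  finally show ?thesis by (simp only: of_real_eq_iff)
qed

text \<open>Equality case of Cauchy--Schwarz.\<close>

lemma eq_proj_if_cmod_inner_eq_1:
  fixes u :: "'b \<Rightarrow> real" and v :: "'b \<Rightarrow> complex"
  assumes finB: "finite B" and u1: "(\<Sum>b\<in>B. (u b)\<^sup>2) = 1" and v1: "(\<Sum>b\<in>B. (cmod (v b))\<^sup>2) = 1"
    and \<gamma>: "\<gamma> = (\<Sum>b\<in>B. of_real (u b) * v b)" and \<gamma>1: "cmod \<gamma> = 1" and b: "b \<in> B"
  shows "v b = \<gamma> * of_real (u b)"
proof -
  have "(\<Sum>c\<in>B. (cmod (v c - \<gamma> * of_real (u c)))\<^sup>2) = 0"
    unfolding sum_cmod_sq_diff_proj[OF finB u1 \<gamma>] v1 \<gamma>1 by simp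
  hence "(cmod (v b - \<gamma> * of_real (u b)))\<^sup>2 = 0"
    using sum_nonneg_eq_0_iff[OF finB, of "\<lambda>c. (cmod (v c - \<gamma> * of_real (u c)))\<^sup>2"] b by simp
  thus ?thesis by simp
qed

lemma fidelity_after_perfect_state_transfer:
  fixes H :: "real^'n::finite^'n" and B :: "(real^'n) set"
  assumes finB: "finite B" and components: "\<And>i j. (\<Sum>b\<in>B. b$i * b$j) = (if i = j then 1 else 0)"
    and evol: "\<And>t i j. evol H t $ i $ j = (\<Sum>b\<in>B. cis (t * d b) * of_real (b$i * b$j))"
    and PST: "fidelity H s r t0 = 1"
  shows "fidelity H s r (t0 + h) = (cmod (\<Sum>b\<in>B. of_real ((b$s)\<^sup>2) * cis (h * d b)))\<^sup>2"
proof -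
  define v where "v b = of_real (b$r) * cis (t0 * d b)" for b
  define \<gamma> where "\<gamma> = evol H t0 $ s $ r"
  have \<gamma>_sum: "\<gamma> = (\<Sum>b\<in>B. of_real (b$s) * v b)"
    unfolding \<gamma>_def evol v_def by (intro sum.cong refl) (simp add: mult_ac)
  have \<gamma>1: "cmod \<gamma> = 1"
    using PST norm_ge_zero[of \<gamma>] unfolding fidelity_def \<gamma>_def by (auto simp: power2_eq_1_iff)
  have v1: "(\<Sum>b\<in>B. (cmod (v b))\<^sup>2) = 1"
    using components[of r r] by (simp add: v_def norm_mult power2_eq_square)
  have v: "v b = \<gamma> * of_real (b$s)" if "b \<in> B" for b
    by (rule eq_proj_if_cmod_inner_eq_1[OF finB _ v1 \<gamma>_sum \<gamma>1 that])
      (use components[of s s] in \<open>simp add: power2_eq_square\<close>)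
  have "cis ((t0 + h) * x) = cis (t0 * x) * cis (h * x)" for x by (simp add: cis_mult distrib_right)
  hence "evol H (t0 + h) $ s $ r = (\<Sum>b\<in>B. of_real (b$s) * v b * cis (h * d b))"
    unfolding evol v_def by (intro sum.cong refl) (simp add: mult_ac)
  also have "\<dots> = \<gamma> * (\<Sum>b\<in>B. of_real ((b$s)\<^sup>2) * cis (h * d b))"
    by (simp add: sum_distrib_left v power2_eq_square mult_ac cong: sum.cong)
  finally show ?thesis unfolding fidelity_def using \<gamma>1 by (simp add: norm_mult)
qed

lemma cmod_cis_add_cis_sq: "(cmod (cis a + cis b))\<^sup>2 = 2 + 2 * cos (a - b)"
proof -
  have "(cmod (cis a + cis b))\<^sup>2 = (cos a + cos b)\<^sup>2 + (sin a + sin b)\<^sup>2" by (simp add: cmod_power2)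
  also have "\<dots> = ((sin a)\<^sup>2 + (cos a)\<^sup>2) + ((sin b)\<^sup>2 + (cos b)\<^sup>2) + 2 * (cos a * cos b + sin a * sin b)"
    by algebra
  finally have "(cmod (cis a + cis b))\<^sup>2 = \<dots>" .
  thus ?thesis unfolding sin_cos_squared_add cos_diff by simp
qed

text \<open>Rotating by the midpoint phase \<open>h (m + M) / 2\<close>, every phase \<open>h e b\<close> lies within
  \<open>\<alpha> = \<bar>h\<bar> (M - m) / 2 < \<pi>/2\<close> of the real axis, so the real part of the convex combination is
  at least \<open>cos \<alpha>\<close>; and \<open>cos\<^sup>2 \<alpha>\<close> is exactly the left-hand side.\<close>

lemma cmod_convex_combination_cis_ge:
  fixes B :: "'b set" and q e :: "'b \<Rightarrow> real"
  assumes finB: "finite B" and q0: "\<And>b. b \<in> B \<Longrightarrow> q b \<ge> 0" and q1: "(\<Sum>b\<in>B. q b) = 1"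
    and range: "\<And>b. b \<in> B \<Longrightarrow> m \<le> e b \<and> e b \<le> M"
    and h: "(M - m) * \<bar>h\<bar> < pi"
  shows "1/4 * (cmod (exp (\<i> * complex_of_real (h * m)) + exp (\<i> * complex_of_real (h * M))))\<^sup>2
         \<le> (cmod (\<Sum>b\<in>B. complex_of_real (q b) * cis (h * e b)))\<^sup>2"
proof -
  obtain b0 where "b0 \<in> B" using q1 by fastforce
  hence mM: "m \<le> M" using range by force
  define \<delta> where "\<delta> = (M - m) / 2"
  define c where "c = (m + M) / 2"
  define \<alpha> where "\<alpha> = \<bar>h\<bar> * \<delta>"
  have \<alpha>: "0 \<le> \<alpha>" "\<alpha> < pi / 2"
    unfolding \<alpha>_def \<delta>_def using mM h by (simp, simp add: algebra_simps)
  define z where "z = (\<Sum>b\<in>B. complex_of_real (q b) * cis (h * e b))"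
  have cos_ge: "cos \<alpha> \<le> cos (h * e b - h * c)" if "b \<in> B" for b
  proof -
    have "\<bar>e b - c\<bar> \<le> \<delta>"
      using range[OF that] unfolding c_def \<delta>_def by (simp only: abs_le_iff) (auto simp: field_simps)
    hence "\<bar>h * e b - h * c\<bar> \<le> \<alpha>" unfolding \<alpha>_def
      by (simp add: right_diff_distrib[symmetric] abs_mult mult_left_mono)
    hence "cos \<alpha> \<le> cos \<bar>h * e b - h * c\<bar>" using \<alpha> by (intro cos_monotone_0_pi_le) auto
    thus ?thesis by simp
  qed
  have "cos \<alpha> = (\<Sum>b\<in>B. q b * cos \<alpha>)" using q1 by (simp flip: sum_distrib_right)
  also have "\<dots> \<le> (\<Sum>b\<in>B. q b * cos (h * e b - h * c))"
    by (intro sum_mono mult_left_mono cos_ge q0)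
  also have "\<dots> = Re (z * cis (- (h * c)))"
    unfolding z_def by (simp add: sum_distrib_right Re_sum cis_mult cos_diff algebra_simps sum.distrib sum_distrib_left)
  also have "\<dots> \<le> cmod z"
    using complex_Re_le_cmod[of "z * cis (- (h * c))"] by (simp add: norm_mult)
  finally have z: "cos \<alpha> \<le> cmod z" .
  have "h * m - h * M = - (2 * (h * \<delta>))" unfolding \<delta>_def by (simp add: field_simps)
  moreover have "cos (2 * (h * \<delta>)) = cos (2 * \<alpha>)" unfolding \<alpha>_def
    by (cases "h \<ge> 0") (simp_all add: abs_if)
  ultimately have "cos (h * m - h * M) = cos (2 * \<alpha>)" by simp
  hence "1/4 * (cmod (exp (\<i> * complex_of_real (h * m)) + exp (\<i> * complex_of_real (h * M))))\<^sup>2 = (cos \<alpha>)\<^sup>2"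
    unfolding cis_conv_exp[symmetric] cmod_cis_add_cis_sq cos_double_cos by simp
  thus ?thesis unfolding z_def[symmetric] using z \<alpha> by (simp add: cos_ge_zero power_mono)
qed

lemma fidelity_after_perfect_state_transfer_ge:
  fixes H :: "real^'n::finite^'n"
  assumes sym: "transpose H = H"
    and PST: "fidelity H s r t0 = 1"
    and h: "(Max (real_eigenvalues H) - Min (real_eigenvalues H)) * \<bar>h\<bar> < pi"
  shows "fidelity H s r (t0 + h) \<ge>
           1/4 * (cmod (exp (\<i> * complex_of_real (h * Min (real_eigenvalues H)))
                      + exp (\<i> * complex_of_real (h * Max (real_eigenvalues H)))))\<^sup>2"
proof -
  obtain B d where finB: "finite B" and components: "\<And>i j. (\<Sum>b\<in>B. b$i * b$j) = (if i = j then 1 else 0)"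
    and eigenvalues: "real_eigenvalues H = d ` B"
    and evol: "\<And>t i j. evol H t $ i $ j = (\<Sum>b\<in>B. cis (t * d b) * of_real (b$i * b$j))"
    using symmetric_matrix_evol_eigenbasis[OF sym] by blast
  have "Min (real_eigenvalues H) \<le> d b \<and> d b \<le> Max (real_eigenvalues H)" if "b \<in> B" for b
    using that finB unfolding eigenvalues by simp
  moreover have "(\<Sum>b\<in>B. (b$s)\<^sup>2) = 1" using components[of s s] by (simp add: power2_eq_square)
  ultimately show ?thesis
    unfolding fidelity_after_perfect_state_transfer[OF finB components evol PST]
    by (intro cmod_convex_combination_cis_ge[OF finB _ _ _ h]) simp_all
qed

lemma adj_lap_mat_symmetric:
  fixes E :: "'n::finite \<Rightarrow> 'n \<Rightarrow> bool"
  assumes "\<And>j k. E j k \<Longrightarrow> E k j" and "\<And>j k. w j k = w k j"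
    and "H = adj_mat E w \<or> H = lap_mat E w"
  shows "transpose H = H"
proof -
  have "transpose (adj_mat E w) = adj_mat E w"
    using assms(1,2) by (auto simp: adj_mat_def transpose_def vec_eq_iff)
  thus ?thesis using assms(3) by (auto simp: lap_mat_def transpose_def vec_eq_iff)
qed

theorem theorem2p1:
  fixes E :: "'n::finite \<Rightarrow> 'n \<Rightarrow> bool" and w :: "'n \<Rightarrow> 'n \<Rightarrow> real"
    and H :: "real^'n^'n" and s r :: 'n and t0 h :: real
  assumes E_sym: "\<And>j k. E j k \<Longrightarrow> E k j"
    and E_irrefl: "\<And>j. \<not> E j j"
    and w_sym: "\<And>j k. w j k = w k j"
    and connected: "\<And>j k. E\<^sup>*\<^sup>* j k"
    and H_def: "H = adj_mat E w \<or> H = lap_mat E w"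
    and PST: "fidelity H s r t0 = 1"
    and h_bound: "(Max (real_eigenvalues H) - Min (real_eigenvalues H)) * \<bar>h\<bar> < pi"
  shows "fidelity H s r (t0 + h) \<ge>
           1/4 * (cmod (exp (\<i> * complex_of_real (h * Min (real_eigenvalues H)))
                      + exp (\<i> * complex_of_real (h * Max (real_eigenvalues H)))))\<^sup>2"
  using fidelity_after_perfect_state_transfer_ge[OF adj_lap_mat_symmetric[OF E_sym w_sym H_def] PST h_bound] .

end
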